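(* Let $F$ be an algebraically closed field of characteristic different from $2$ and $3$, and let $K_{10}=F\cdot 1\oplus(K_3\otimes K_3)$ be the Kac Jordan superalgebra in the realization described in the context. Let $\varphi\colon K_{10}\to K_{10}$ be the automorphism $\varphi(\lambda 1+a\otimes b)=\lambda 1+(-1)^{\bar a\bar b}\,b\otimes a$ (for $\lambda\in F$ and homogeneous $a,b\in K_3$, extended linearly). Then the maximal subalgebras of $K_{10}$ are, up to conjugation by automorphisms of $K_{10}$, the following: (i) $(K_{10})_{\bar 0}$; (ii) the subalgebra of elements fixed by $\varphi$; (iii) the subalgebra $F\cdot 1\oplus(M\otimes K_3)$, where $M=Fe+Fx$ (a maximal subalgebra of $K_3$); (iv) the subalgebra $F\cdot 1+F(e\otimes e)+(x\otimes K_3)+(K_3\otimes y)$.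
   Context: The Kaplansky superalgebra $K_3$ has even part $Fe$ and odd part $Fx+Fy$, with products $e^2=e$, $ex=xe=\tfrac12x$, $ey=ye=\tfrac12y$, $xy=e$, $yx=-e$, $x^2=y^2=0$. It carries the supersymmetric bilinear form with $(e|e)=\tfrac12$, $(x|y)=1$, $(y|x)=-1$, $(x|x)=(y|y)=0$, and even and odd parts orthogonal. $K_{10}=F\cdot1\oplus(K_3\otimes K_3)$ is the superalgebra in which $1$ is an even identity element, $a\otimes b$ (for homogeneous $a,b\in K_3$) has parity $\bar a+\bar b$, and $(a\otimes b)(c\otimes d)=(-1)^{\bar b\bar c}\bigl(ac\otimes bd-\tfrac34(a|c)(b|d)1\bigr)$; this is (isomorphic to) the $10$-dimensional Kac Jordan superalgebra. Subalgebras are graded subalgebras; maximal means proper and maximal under inclusion; automorphisms are grading-preserving. *)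

theory Defs
  imports Main "HOL-Computational_Algebra.Polynomial"
begin

definition alg_closed :: "'a::field itself \<Rightarrow> bool" where
  "alg_closed t \<longleftrightarrow> (\<forall>p::'a poly. degree p > 0 \<longrightarrow> (\<exists>x. poly p x = 0))"

datatype k3 = E | X | Y

instance k3 :: finite
proof
  have "UNIV = {E, X, Y}" using k3.exhaust by auto
  then show "finite (UNIV :: k3 set)" by (metis finite.emptyI finite_insert)
qed

text \<open>Parity of basis vectors of K3 (True = odd).\<close>
fun par3 :: "k3 \<Rightarrow> bool" where
  "par3 E = False" | "par3 X = True" | "par3 Y = True"

text \<open>Elements of K3 are coefficient vectors k3 => F. Product of basis vectors.\<close>
definition unit3 :: "k3 \<Rightarrow> k3 \<Rightarrow> 'a::field" where
  "unit3 a = (\<lambda>k. if k = a then 1 else 0)"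

fun mul3 :: "k3 \<Rightarrow> k3 \<Rightarrow> k3 \<Rightarrow> 'a::field" where
  "mul3 E E = unit3 E"
| "mul3 E X = (\<lambda>k. (1/2) * unit3 X k)"
| "mul3 X E = (\<lambda>k. (1/2) * unit3 X k)"
| "mul3 E Y = (\<lambda>k. (1/2) * unit3 Y k)"
| "mul3 Y E = (\<lambda>k. (1/2) * unit3 Y k)"
| "mul3 X Y = unit3 E"
| "mul3 Y X = (\<lambda>k. - unit3 E k)"
| "mul3 X X = (\<lambda>k. 0)"
| "mul3 Y Y = (\<lambda>k. 0)"

fun form3 :: "k3 \<Rightarrow> k3 \<Rightarrow> 'a::field" where
  "form3 E E = 1/2"
| "form3 X Y = 1"
| "form3 Y X = -1"
| "form3 _ _ = 0"

text \<open>Basis of K10 = F 1 + K3 (x) K3: the identity One and the tensors T a b.\<close>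
datatype b10 = One | T k3 k3

instance b10 :: finite
proof
  have "UNIV = insert One (case_prod T ` UNIV)"
    by (auto intro: b10.exhaust)
  then show "finite (UNIV :: b10 set)" by (metis finite_UNIV finite_imageI finite_insert)
qed

fun par10 :: "b10 \<Rightarrow> bool" where
  "par10 One = False"
| "par10 (T a b) = (par3 a \<noteq> par3 b)"

definition unit10 :: "b10 \<Rightarrow> b10 \<Rightarrow> 'a::field" where
  "unit10 i = (\<lambda>k. if k = i then 1 else 0)"

text \<open>Product of basis vectors of K10:
  (a(x)b)(c(x)d) = (-1)^(|b||c|) (ac (x) bd - 3/4 (a|c)(b|d) 1).\<close>
fun mul10b :: "b10 \<Rightarrow> b10 \<Rightarrow> b10 \<Rightarrow> 'a::field" where
  "mul10b One j = unit10 j"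
| "mul10b (T a b) One = unit10 (T a b)"
| "mul10b (T a b) (T c d) =
     (\<lambda>k. (if par3 b \<and> par3 c then -1 else 1) *
        (case k of One \<Rightarrow> - (3/4) * form3 a c * form3 b d
                 | T p q \<Rightarrow> mul3 a c p * mul3 b d q))"

type_synonym 'a k10 = "b10 \<Rightarrow> 'a"

definition vzero :: "'a::field k10" where "vzero = (\<lambda>i. 0)"
definition vadd :: "'a::field k10 \<Rightarrow> 'a k10 \<Rightarrow> 'a k10" where
  "vadd u v = (\<lambda>i. u i + v i)"
definition smul :: "'a::field \<Rightarrow> 'a k10 \<Rightarrow> 'a k10" where
  "smul c u = (\<lambda>i. c * u i)"

definition mult10 :: "'a::field k10 \<Rightarrow> 'a k10 \<Rightarrow> 'a k10" where
  "mult10 u v = (\<lambda>k. \<Sum>i\<in>UNIV. \<Sum>j\<in>UNIV. u i * v j * mul10b i j k)"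

definition is_even :: "'a::field k10 \<Rightarrow> bool" where
  "is_even u \<longleftrightarrow> (\<forall>i. par10 i \<longrightarrow> u i = 0)"
definition is_odd :: "'a::field k10 \<Rightarrow> bool" where
  "is_odd u \<longleftrightarrow> (\<forall>i. \<not> par10 i \<longrightarrow> u i = 0)"
definition even_part :: "'a::field k10 \<Rightarrow> 'a k10" where
  "even_part u = (\<lambda>i. if par10 i then 0 else u i)"

text \<open>Graded subalgebra: subspace closed under product and under taking the even
  (hence also the odd) homogeneous component.\<close>
definition subalg :: "'a::field k10 set \<Rightarrow> bool" where
  "subalg S \<longleftrightarrow> vzero \<in> S \<and> (\<forall>u\<in>S. \<forall>v\<in>S. vadd u v \<in> S) \<and>
     (\<forall>c. \<forall>u\<in>S. smul c u \<in> S) \<and> (\<forall>u\<in>S. \<forall>v\<in>S. mult10 u v \<in> S) \<and>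
     (\<forall>u\<in>S. even_part u \<in> S)"

definition maximal_subalg :: "'a::field k10 set \<Rightarrow> bool" where
  "maximal_subalg S \<longleftrightarrow> subalg S \<and> S \<noteq> UNIV \<and>
     (\<forall>S'. subalg S' \<and> S \<subseteq> S' \<and> S' \<noteq> UNIV \<longrightarrow> S' = S)"

definition aut10 :: "('a::field k10 \<Rightarrow> 'a k10) \<Rightarrow> bool" where
  "aut10 f \<longleftrightarrow> bij f \<and> (\<forall>u v. f (vadd u v) = vadd (f u) (f v)) \<and>
     (\<forall>c u. f (smul c u) = smul c (f u)) \<and>
     (\<forall>u v. f (mult10 u v) = mult10 (f u) (f v)) \<and>
     (\<forall>u. is_even u \<longrightarrow> is_even (f u)) \<and> (\<forall>u. is_odd u \<longrightarrow> is_odd (f u))"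

definition phi10 :: "'a::field k10 \<Rightarrow> 'a k10" where
  "phi10 u = (\<lambda>k. case k of One \<Rightarrow> u One
     | T c d \<Rightarrow> (if par3 c \<and> par3 d then -1 else 1) * u (T d c))"

definition sub_even :: "'a::field k10 set" where
  "sub_even = {u. is_even u}"
definition sub_phi :: "'a::field k10 set" where
  "sub_phi = {u. phi10 u = u}"
text \<open>F 1 + (M (x) K3), M = Fe + Fx.\<close>
definition sub_M :: "'a::field k10 set" where
  "sub_M = {u. \<forall>c. u (T Y c) = 0}"
text \<open>F 1 + F(e(x)e) + (x (x) K3) + (K3 (x) y).\<close>
definition sub_iv :: "'a::field k10 set" where
  "sub_iv = {u. \<forall>a b. (a, b) \<noteq> (E, E) \<and> a \<noteq> X \<and> b \<noteq> Y \<longrightarrow> u (T a b) = 0}"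

end

theory Submission
  imports Defs
begin

text \<open>Write \<open>V = Fx + Fy\<close>. The odd part of \<open>K\<^sub>1\<^sub>0\<close> is \<open>V\<otimes>e \<oplus> e\<otimes>V\<close>, its even part is
  \<open>F1 + F e\<otimes>e + V\<otimes>V\<close>, and \<open>SL(V) \<times> SL(V)\<close> acts by automorphisms \<open>g \<otimes> h\<close>, as does the swap \<open>\<phi>\<close>.
  For a proper subalgebra \<open>S\<close> compare the projections of its odd part to \<open>V\<otimes>e\<close> and to \<open>e\<otimes>V\<close>.
  If \<open>S\<close> has no odd part it lies in \<open>(K\<^sub>1\<^sub>0)\<^sub>0\<close>. If both projections have rank at most one,
  \<open>g \<otimes> h\<close> moves them into \<open>Fx\<otimes>e\<close> and \<open>e\<otimes>Fy\<close>, and \<open>S\<close> lies in (iv); if exactly one has rank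
  two, \<open>S\<close> is conjugate (after \<open>\<phi>\<close>) into (iii). If both have rank two, \<open>(w w') w\<close> scales the two
  halves of an odd \<open>w\<close> by the areas that \<open>w, w'\<close> span in \<open>V\<otimes>e\<close> and in \<open>e\<otimes>V\<close>; unequal areas
  separate the halves and generate \<open>K\<^sub>1\<^sub>0\<close>, while equal areas let \<open>g \<otimes> h\<close> normalise two odd
  elements to \<open>x\<otimes>e + e\<otimes>x\<close> and \<open>y\<otimes>e + e\<otimes>y\<close>, which forces \<open>S\<close> into the \<open>\<phi>\<close>-fixed subalgebra.
  Conversely each of the four subalgebras generates \<open>K\<^sub>1\<^sub>0\<close> together with any element outside it.\<close>

section \<open>Coordinates\<close>

lemma UNIV_b10:
  "(UNIV :: b10 set) = {One, T E E, T E X, T E Y, T X E, T X X, T X Y, T Y E, T Y X, T Y Y}"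
proof (rule UNIV_eq_I)
  fix k :: b10
  show "k \<in> {One, T E E, T E X, T E Y, T X E, T X X, T X Y, T Y E, T Y X, T Y Y}"
  proof (cases k)
    case (T a b) then show ?thesis by (cases a; cases b) simp_all
  qed simp
qed

definition vec :: "'a::field \<Rightarrow> 'a \<Rightarrow> 'a \<Rightarrow> 'a \<Rightarrow> 'a \<Rightarrow> 'a \<Rightarrow> 'a \<Rightarrow> 'a \<Rightarrow> 'a \<Rightarrow> 'a \<Rightarrow> 'a k10"
  where "vec a0 aEE aEX aEY aXE aXX aXY aYE aYX aYY = (\<lambda>k. case k of One \<Rightarrow> a0 | T a b \<Rightarrow>
    (case a of
      E \<Rightarrow> (case b of E \<Rightarrow> aEE | X \<Rightarrow> aEX | Y \<Rightarrow> aEY)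
    | X \<Rightarrow> (case b of E \<Rightarrow> aXE | X \<Rightarrow> aXX | Y \<Rightarrow> aXY)
    | Y \<Rightarrow> (case b of E \<Rightarrow> aYE | X \<Rightarrow> aYX | Y \<Rightarrow> aYY)))"

lemma vec_simps [simp]:
  "vec a0 aEE aEX aEY aXE aXX aXY aYE aYX aYY One = a0"
  "vec a0 aEE aEX aEY aXE aXX aXY aYE aYX aYY (T E E) = aEE"
  "vec a0 aEE aEX aEY aXE aXX aXY aYE aYX aYY (T E X) = aEX"
  "vec a0 aEE aEX aEY aXE aXX aXY aYE aYX aYY (T E Y) = aEY"
  "vec a0 aEE aEX aEY aXE aXX aXY aYE aYX aYY (T X E) = aXE"
  "vec a0 aEE aEX aEY aXE aXX aXY aYE aYX aYY (T X X) = aXX"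
  "vec a0 aEE aEX aEY aXE aXX aXY aYE aYX aYY (T X Y) = aXY"
  "vec a0 aEE aEX aEY aXE aXX aXY aYE aYX aYY (T Y E) = aYE"
  "vec a0 aEE aEX aEY aXE aXX aXY aYE aYX aYY (T Y X) = aYX"
  "vec a0 aEE aEX aEY aXE aXX aXY aYE aYX aYY (T Y Y) = aYY"
  by (simp_all add: vec_def)

lemma vec_eta:
  "(u :: 'a::field k10) = vec (u One) (u (T E E)) (u (T E X)) (u (T E Y)) (u (T X E))
     (u (T X X)) (u (T X Y)) (u (T Y E)) (u (T Y X)) (u (T Y Y))"
proof
  fix k show "u k = vec (u One) (u (T E E)) (u (T E X)) (u (T E Y)) (u (T X E))
     (u (T X X)) (u (T X Y)) (u (T Y E)) (u (T Y X)) (u (T Y Y)) k"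
    by (cases k) (auto simp: vec_def split: k3.split)
qed

lemma vec_eq_iff:
  "vec a0 aEE aEX aEY aXE aXX aXY aYE aYX aYY = vec b0 bEE bEX bEY bXE bXX bXY bYE bYX bYY \<longleftrightarrow>
   a0 = b0 \<and> aEE = bEE \<and> aEX = bEX \<and> aEY = bEY \<and> aXE = bXE \<and> aXX = bXX \<and> aXY = bXY \<and>
   aYE = bYE \<and> aYX = bYX \<and> aYY = bYY"
  by (metis vec_simps)

lemma vadd_vec:
  "vadd (vec a0 aEE aEX aEY aXE aXX aXY aYE aYX aYY) (vec b0 bEE bEX bEY bXE bXX bXY bYE bYX bYY) =
   vec (a0 + b0) (aEE + bEE) (aEX + bEX) (aEY + bEY) (aXE + bXE) (aXX + bXX) (aXY + bXY)
     (aYE + bYE) (aYX + bYX) (aYY + bYY)"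
  unfolding vadd_def by (rule ext) (simp add: vec_def split: b10.split k3.split)

lemma smul_vec:
  "smul c (vec a0 aEE aEX aEY aXE aXX aXY aYE aYX aYY) =
   vec (c * a0) (c * aEE) (c * aEX) (c * aEY) (c * aXE) (c * aXX) (c * aXY) (c * aYE) (c * aYX) (c * aYY)"
  unfolding smul_def by (rule ext) (simp add: vec_def split: b10.split k3.split)

lemma even_part_vec:
  "even_part (vec a0 aEE aEX aEY aXE aXX aXY aYE aYX aYY) = vec a0 aEE 0 0 0 aXX aXY 0 aYX aYY"
  unfolding even_part_def by (rule ext) (simp add: vec_def split: b10.split k3.split)

text \<open>The product in coordinates, with the structure constants \<open>1/2, 1/4, 3/8, 3/4, 3/16\<close>
  replaced by parameters: the identities between products proved below then become ring
  identities, valid in every characteristic.\<close>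
definition mult_param ::
    "'a::field \<Rightarrow> 'a \<Rightarrow> 'a \<Rightarrow> 'a \<Rightarrow> 'a \<Rightarrow> 'a k10 \<Rightarrow> 'a k10 \<Rightarrow> 'a k10"
  where "mult_param k2 k4 k38 k34 k316 u v =
   (let a0 = u One; aEE = u (T E E); aEX = u (T E X); aEY = u (T E Y); aXE = u (T X E);
        aXX = u (T X X); aXY = u (T X Y); aYE = u (T Y E); aYX = u (T Y X); aYY = u (T Y Y);
        b0 = v One; bEE = v (T E E); bEX = v (T E X); bEY = v (T E Y); bXE = v (T X E);
        bXX = v (T X X); bXY = v (T X Y); bYE = v (T Y E); bYX = v (T Y X); bYY = v (T Y Y)
    in vec
     (a0*b0 - k316*aEE*bEE - k38*aEX*bEY + k38*aEY*bEX - k38*aXE*bYE + k34*aXX*bYY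
        - k34*aXY*bYX + k38*aYE*bXE - k34*aYX*bXY + k34*aYY*bXX)
     (a0*bEE + aEE*b0 + aEE*bEE + aEX*bEY - aEY*bEX + aXE*bYE - aXX*bYY + aXY*bYX
        - aYE*bXE + aYX*bXY - aYY*bXX)
     (a0*bEX + k2*aEE*bEX + aEX*b0 + k2*aEX*bEE + k2*aXE*bYX - k2*aXX*bYE - k2*aYE*bXX
        + k2*aYX*bXE)
     (a0*bEY + k2*aEE*bEY + aEY*b0 + k2*aEY*bEE + k2*aXE*bYY - k2*aXY*bYE - k2*aYE*bXY
        + k2*aYY*bXE)
     (a0*bXE + k2*aEE*bXE - k2*aEX*bXY + k2*aEY*bXX + aXE*b0 + k2*aXE*bEE + k2*aXX*bEY
        - k2*aXY*bEX)
     (a0*bXX + k4*aEE*bXX - k4*aEX*bXE + k4*aXE*bEX + aXX*b0 + k4*aXX*bEE)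
     (a0*bXY + k4*aEE*bXY - k4*aEY*bXE + k4*aXE*bEY + aXY*b0 + k4*aXY*bEE)
     (a0*bYE + k2*aEE*bYE - k2*aEX*bYY + k2*aEY*bYX + aYE*b0 + k2*aYE*bEE + k2*aYX*bEY
        - k2*aYY*bEX)
     (a0*bYX + k4*aEE*bYX - k4*aEX*bYE + k4*aYE*bEX + aYX*b0 + k4*aYX*bEE)
     (a0*bYY + k4*aEE*bYY - k4*aEY*bYE + k4*aYE*bEY + aYY*b0 + k4*aYY*bEE))"

lemma mult10_eq_mult_param: "mult10 u v = mult_param (1/2) (1/4) (3/8) (3/4) (3/16) u v"
proof
  fix k show "mult10 u v k = mult_param (1/2) (1/4) (3/8) (3/4) (3/16) u v k"
  proof (cases k)
    case One then show ?thesis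
      by (simp add: Let_def mult10_def mult_param_def UNIV_b10 unit10_def unit3_def algebra_simps)
  next
    case (T a b) then show ?thesis
      by (cases a; cases b)
        (simp_all add: Let_def mult10_def mult_param_def UNIV_b10 unit10_def unit3_def algebra_simps)
  qed
qed

text \<open>\<open>odd_elt p1 p2 q1 q2 = p1 x\<otimes>e + p2 y\<otimes>e + q1 e\<otimes>x + q2 e\<otimes>y\<close> and
  \<open>even_elt a c t11 t12 t21 t22 = a 1 + c e\<otimes>e + t11 x\<otimes>x + t12 x\<otimes>y + t21 y\<otimes>x + t22 y\<otimes>y\<close>.\<close>
definition odd_elt :: "'a::field \<Rightarrow> 'a \<Rightarrow> 'a \<Rightarrow> 'a \<Rightarrow> 'a k10"
  where "odd_elt p1 p2 q1 q2 = vec 0 0 q1 q2 p1 0 0 p2 0 0"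

definition even_elt :: "'a::field \<Rightarrow> 'a \<Rightarrow> 'a \<Rightarrow> 'a \<Rightarrow> 'a \<Rightarrow> 'a \<Rightarrow> 'a k10"
  where "even_elt a c t11 t12 t21 t22 = vec a c 0 0 0 t11 t12 0 t21 t22"

lemma odd_elt_simps [simp]:
  "odd_elt p1 p2 q1 q2 One = 0" "odd_elt p1 p2 q1 q2 (T E E) = 0"
  "odd_elt p1 p2 q1 q2 (T E X) = q1" "odd_elt p1 p2 q1 q2 (T E Y) = q2"
  "odd_elt p1 p2 q1 q2 (T X E) = p1" "odd_elt p1 p2 q1 q2 (T Y E) = p2"
  "odd_elt p1 p2 q1 q2 (T X X) = 0" "odd_elt p1 p2 q1 q2 (T X Y) = 0"
  "odd_elt p1 p2 q1 q2 (T Y X) = 0" "odd_elt p1 p2 q1 q2 (T Y Y) = 0"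
  by (simp_all add: odd_elt_def)

lemma even_elt_simps [simp]:
  "even_elt a c t11 t12 t21 t22 One = a" "even_elt a c t11 t12 t21 t22 (T E E) = c"
  "even_elt a c t11 t12 t21 t22 (T E X) = 0" "even_elt a c t11 t12 t21 t22 (T E Y) = 0"
  "even_elt a c t11 t12 t21 t22 (T X E) = 0" "even_elt a c t11 t12 t21 t22 (T Y E) = 0"
  "even_elt a c t11 t12 t21 t22 (T X X) = t11" "even_elt a c t11 t12 t21 t22 (T X Y) = t12"
  "even_elt a c t11 t12 t21 t22 (T Y X) = t21" "even_elt a c t11 t12 t21 t22 (T Y Y) = t22"
  by (simp_all add: even_elt_def)

lemma odd_elt_eq_iff:
  "odd_elt p1 p2 q1 q2 = odd_elt r1 r2 s1 s2 \<longleftrightarrow> p1 = r1 \<and> p2 = r2 \<and> q1 = s1 \<and> q2 = s2"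
  by (auto simp: odd_elt_def vec_eq_iff)

lemma even_odd_decomposition:
  "u = vadd (even_elt (u One) (u (T E E)) (u (T X X)) (u (T X Y)) (u (T Y X)) (u (T Y Y)))
            (odd_elt (u (T X E)) (u (T Y E)) (u (T E X)) (u (T E Y)))"
  by (subst (1) vec_eta) (simp add: even_elt_def odd_elt_def vadd_vec)

lemma vadd_odd_elt:
  "vadd (odd_elt p1 p2 q1 q2) (odd_elt r1 r2 s1 s2) = odd_elt (p1 + r1) (p2 + r2) (q1 + s1) (q2 + s2)"
  by (simp add: odd_elt_def vadd_vec)

lemma smul_odd_elt: "smul c (odd_elt p1 p2 q1 q2) = odd_elt (c * p1) (c * p2) (c * q1) (c * q2)"
  by (simp add: odd_elt_def smul_vec)

lemma vadd_even_elt: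
  "vadd (even_elt a c t11 t12 t21 t22) (even_elt b d s11 s12 s21 s22) =
   even_elt (a + b) (c + d) (t11 + s11) (t12 + s12) (t21 + s21) (t22 + s22)"
  by (simp add: even_elt_def vadd_vec)

lemma smul_even_elt:
  "smul r (even_elt a c t11 t12 t21 t22) =
   even_elt (r * a) (r * c) (r * t11) (r * t12) (r * t21) (r * t22)"
  by (simp add: even_elt_def smul_vec)

lemma mult_param_odd_odd:
  "mult_param k2 k4 k38 k34 k316 (odd_elt p1 p2 q1 q2) (odd_elt r1 r2 s1 s2) =
   even_elt (- k38 * (q1*s2 - q2*s1 + p1*r2 - p2*r1)) (q1*s2 - q2*s1 + p1*r2 - p2*r1)
     (k4 * (p1*s1 - q1*r1)) (k4 * (p1*s2 - q2*r1)) (k4 * (p2*s1 - q1*r2)) (k4 * (p2*s2 - q2*r2))"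
  unfolding odd_elt_def even_elt_def mult_param_def Let_def vec_eq_iff vec_simps
  by (intro conjI; algebra)

lemma mult_param_even_even:
  "mult_param k2 k4 k38 k34 k316 (even_elt a c t11 t12 t21 t22) (even_elt b d s11 s12 s21 s22) =
   even_elt (a*b - k316*c*d + k34 * (t11*s22 - t12*s21 - t21*s12 + t22*s11))
     (a*d + c*b + c*d - (t11*s22 - t12*s21 - t21*s12 + t22*s11))
     (a*s11 + k4*c*s11 + t11*b + k4*t11*d) (a*s12 + k4*c*s12 + t12*b + k4*t12*d)
     (a*s21 + k4*c*s21 + t21*b + k4*t21*d) (a*s22 + k4*c*s22 + t22*b + k4*t22*d)"
  unfolding odd_elt_def even_elt_def mult_param_def Let_def vec_eq_iff vec_simps
  by (intro conjI; algebra)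

lemma mult_param_even_odd:
  "mult_param k2 k4 k38 k34 k316 (even_elt a c t11 t12 t21 t22) (odd_elt p1 p2 q1 q2) =
   odd_elt ((a + k2*c)*p1 + k2*(t11*q2 - t12*q1)) ((a + k2*c)*p2 + k2*(t21*q2 - t22*q1))
     ((a + k2*c)*q1 + k2*(t21*p1 - t11*p2)) ((a + k2*c)*q2 + k2*(t22*p1 - t12*p2))"
  unfolding odd_elt_def even_elt_def mult_param_def Let_def vec_eq_iff vec_simps
  by (intro conjI; algebra)

lemmas mult_odd_odd = mult_param_odd_odd[of "1/2" "1/4" "3/8" "3/4" "3/16", folded mult10_eq_mult_param]
lemmas mult_even_even = mult_param_even_even[of "1/2" "1/4" "3/8" "3/4" "3/16", folded mult10_eq_mult_param]
lemmas mult_even_odd = mult_param_even_odd[of "1/2" "1/4" "3/8" "3/4" "3/16", folded mult10_eq_mult_param]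

lemma is_even_iff: "is_even u \<longleftrightarrow> u (T E X) = 0 \<and> u (T E Y) = 0 \<and> u (T X E) = 0 \<and> u (T Y E) = 0"
  unfolding is_even_def
proof (intro iffI allI impI)
  fix i assume "u (T E X) = 0 \<and> u (T E Y) = 0 \<and> u (T X E) = 0 \<and> u (T Y E) = 0" "par10 i"
  then show "u i = 0" by (cases i) (auto split: k3.splits elim: par3.elims)
qed simp

lemma is_odd_iff:
  "is_odd u \<longleftrightarrow> u One = 0 \<and> u (T E E) = 0 \<and> u (T X X) = 0 \<and> u (T X Y) = 0 \<and>
     u (T Y X) = 0 \<and> u (T Y Y) = 0"
  unfolding is_odd_def
proof (intro iffI allI impI)
  fix i assume "u One = 0 \<and> u (T E E) = 0 \<and> u (T X X) = 0 \<and> u (T X Y) = 0 \<and>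
     u (T Y X) = 0 \<and> u (T Y Y) = 0" "\<not> par10 i"
  then show "u i = 0" by (cases i) (auto split: k3.splits elim: par3.elims)
qed simp

lemma is_even_iff_even_part: "is_even u \<longleftrightarrow> even_part u = u"
  by (auto simp: is_even_def even_part_def fun_eq_iff)

lemma is_odd_iff_even_part: "is_odd u \<longleftrightarrow> even_part u = vzero"
  by (auto simp: is_odd_def even_part_def vzero_def fun_eq_iff)

section \<open>Subalgebras and their generators\<close>

lemma subalg_vadd: "subalg S \<Longrightarrow> u \<in> S \<Longrightarrow> v \<in> S \<Longrightarrow> vadd u v \<in> S"
  and subalg_smul: "subalg S \<Longrightarrow> u \<in> S \<Longrightarrow> smul c u \<in> S"
  and subalg_mult: "subalg S \<Longrightarrow> u \<in> S \<Longrightarrow> v \<in> S \<Longrightarrow> mult10 u v \<in> S"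
  and subalg_even_part: "subalg S \<Longrightarrow> u \<in> S \<Longrightarrow> even_part u \<in> S"
  by (simp_all add: subalg_def)

lemma even_component_mem:
  assumes "subalg S" "u \<in> S"
  shows "even_elt (u One) (u (T E E)) (u (T X X)) (u (T X Y)) (u (T Y X)) (u (T Y Y)) \<in> S"
proof -
  have "even_part u = even_elt (u One) (u (T E E)) (u (T X X)) (u (T X Y)) (u (T Y X)) (u (T Y Y))"
    by (subst vec_eta[of u]) (simp add: even_part_vec even_elt_def)
  then show ?thesis using subalg_even_part[OF assms] by simp
qed

lemma odd_component_mem:
  assumes "subalg S" "u \<in> S"
  shows "odd_elt (u (T X E)) (u (T Y E)) (u (T E X)) (u (T E Y)) \<in> S"
proof -
  have "vadd u (smul (-1) (even_part u)) = odd_elt (u (T X E)) (u (T Y E)) (u (T E X)) (u (T E Y))"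
    by (subst (1 2) vec_eta[of u]) (simp add: even_part_vec odd_elt_def vadd_vec smul_vec)
  then show ?thesis
    using assms by (metis subalg_vadd subalg_smul subalg_even_part)
qed

lemma odd_elt_lincomb_mem:
  assumes "subalg S" "odd_elt p1 p2 q1 q2 \<in> S" "odd_elt r1 r2 s1 s2 \<in> S"
  shows "odd_elt (a*p1 + b*r1) (a*p2 + b*r2) (a*q1 + b*s1) (a*q2 + b*s2) \<in> S"
  using subalg_vadd[OF assms(1) subalg_smul[OF assms(1,2)] subalg_smul[OF assms(1,3)]]
  by (simp add: smul_odd_elt vadd_odd_elt)

lemma odd_elt_smul_mem:
  "subalg S \<Longrightarrow> odd_elt p1 p2 q1 q2 \<in> S \<Longrightarrow> odd_elt (a*p1) (a*p2) (a*q1) (a*q2) \<in> S"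
  using subalg_smul[of S "odd_elt p1 p2 q1 q2" a] by (simp add: smul_odd_elt)

lemma even_elt_lincomb_mem:
  assumes "subalg S" "even_elt a c t11 t12 t21 t22 \<in> S" "even_elt b d s11 s12 s21 s22 \<in> S"
  shows "even_elt (\<alpha>*a + \<beta>*b) (\<alpha>*c + \<beta>*d) (\<alpha>*t11 + \<beta>*s11) (\<alpha>*t12 + \<beta>*s12)
           (\<alpha>*t21 + \<beta>*s21) (\<alpha>*t22 + \<beta>*s22) \<in> S"
  using subalg_vadd[OF assms(1) subalg_smul[OF assms(1,2)] subalg_smul[OF assms(1,3)]]
  by (simp add: smul_even_elt vadd_even_elt)

lemma odd_elt_mem_cong:
  "odd_elt p1 p2 q1 q2 \<in> S \<Longrightarrow> p1 = p1' \<Longrightarrow> p2 = p2' \<Longrightarrow> q1 = q1' \<Longrightarrow> q2 = q2'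
   \<Longrightarrow> odd_elt p1' p2' q1' q2' \<in> S"
  by simp

lemma even_elt_mem_cong:
  "even_elt a c t11 t12 t21 t22 \<in> S \<Longrightarrow> a = a' \<Longrightarrow> c = c' \<Longrightarrow> t11 = t11' \<Longrightarrow> t12 = t12'
   \<Longrightarrow> t21 = t21' \<Longrightarrow> t22 = t22' \<Longrightarrow> even_elt a' c' t11' t12' t21' t22' \<in> S"
  by simp

lemma subalg_eq_UNIV_if_basis:
  assumes S: "subalg S"
    and even: "even_elt 1 0 0 0 0 0 \<in> S" "even_elt 0 1 0 0 0 0 \<in> S" "even_elt 0 0 1 0 0 0 \<in> S"
      "even_elt 0 0 0 1 0 0 \<in> S" "even_elt 0 0 0 0 1 0 \<in> S" "even_elt 0 0 0 0 0 1 \<in> S"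
    and odd: "odd_elt 1 0 0 0 \<in> S" "odd_elt 0 1 0 0 \<in> S" "odd_elt 0 0 1 0 \<in> S" "odd_elt 0 0 0 1 \<in> S"
  shows "S = UNIV"
proof -
  have all_even: "even_elt a c t11 t12 t21 t22 \<in> S" for a c t11 t12 t21 t22
  proof -
    have ac: "even_elt a c 0 0 0 0 \<in> S" using even_elt_lincomb_mem[OF S even(1,2), of a c] by simp
    have t1: "even_elt 0 0 t11 t12 0 0 \<in> S" using even_elt_lincomb_mem[OF S even(3,4)] by simp
    have t2: "even_elt 0 0 0 0 t21 t22 \<in> S" using even_elt_lincomb_mem[OF S even(5,6)] by simp
    have "even_elt a c t11 t12 0 0 \<in> S" using even_elt_lincomb_mem[OF S ac t1, of 1 1] by simp
    then show ?thesis using even_elt_lincomb_mem[OF S _ t2, of _ _ _ _ 0 0 1 1] by simp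
  qed
  have all_odd: "odd_elt p1 p2 q1 q2 \<in> S" for p1 p2 q1 q2
  proof -
    have p: "odd_elt p1 p2 0 0 \<in> S" using odd_elt_lincomb_mem[OF S odd(1,2), of p1 p2] by simp
    have q: "odd_elt 0 0 q1 q2 \<in> S" using odd_elt_lincomb_mem[OF S odd(3,4)] by simp
    show ?thesis using odd_elt_lincomb_mem[OF S p q, of 1 1] by simp
  qed
  show ?thesis
    using subalg_vadd[OF S all_even all_odd] even_odd_decomposition by (metis UNIV_eq_I)
qed

lemma numeral_Bit0_nonzero:
  assumes "(2::'a::field) \<noteq> 0" and "(numeral n :: 'a) \<noteq> 0"
  shows "(numeral (num.Bit0 n) :: 'a) \<noteq> 0"
  using assms by (metis mult_2 mult_eq_0_iff numeral_Bit0)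

lemma subalg_eq_UNIV_if_odd_basis:
  fixes S :: "'a::field k10 set"
  assumes S: "subalg S" and two: "(2::'a) \<noteq> 0" and three: "(3::'a) \<noteq> 0"
    and x1: "odd_elt 1 0 0 0 \<in> S" and y1: "odd_elt 0 1 0 0 \<in> S"
    and x2: "odd_elt 0 0 1 0 \<in> S" and y2: "odd_elt 0 0 0 1 \<in> S"
  shows "S = UNIV"
proof -
  note nz = numeral_Bit0_nonzero[OF two]
  have t11: "even_elt 0 0 1 0 0 0 \<in> S"
    using subalg_smul[OF S subalg_mult[OF S x1 x2], of 4] nz by (simp add: mult_odd_odd smul_even_elt)
  have t12: "even_elt 0 0 0 1 0 0 \<in> S"
    using subalg_smul[OF S subalg_mult[OF S x1 y2], of 4] nz by (simp add: mult_odd_odd smul_even_elt)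
  have t21: "even_elt 0 0 0 0 1 0 \<in> S"
    using subalg_smul[OF S subalg_mult[OF S y1 x2], of 4] nz by (simp add: mult_odd_odd smul_even_elt)
  have t22: "even_elt 0 0 0 0 0 1 \<in> S"
    using subalg_smul[OF S subalg_mult[OF S y1 y2], of 4] nz by (simp add: mult_odd_odd smul_even_elt)
  have c: "even_elt (-(3/8)) 1 0 0 0 0 \<in> S"
    using subalg_mult[OF S x1 y1] by (simp add: mult_odd_odd)
  have cc: "even_elt (-(3/64)) (1/4) 0 0 0 0 \<in> S"
    by (rule even_elt_mem_cong[OF subalg_mult[OF S c c, unfolded mult_even_even]])
      (use nz in \<open>simp_all add: field_simps\<close>)
  \<comment> \<open>\<open>1\<close> is a combination of \<open>c\<close> and \<open>c\<^sup>2\<close>; this is where \<open>3 \<noteq> 0\<close> enters.\<close>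
  have one: "even_elt 1 0 0 0 0 0 \<in> S"
    by (rule even_elt_mem_cong[OF even_elt_lincomb_mem[OF S cc c, of "64/3" "-16/3"]])
      (use nz three in \<open>simp_all add: field_simps\<close>)
  have ee: "even_elt 0 1 0 0 0 0 \<in> S"
    by (rule even_elt_mem_cong[OF even_elt_lincomb_mem[OF S c one, of 1 "3/8"]])
      (use nz three in \<open>simp_all add: field_simps\<close>)
  show ?thesis by (rule subalg_eq_UNIV_if_basis[OF S one ee t11 t12 t21 t22 x1 y1 x2 y2])
qed

lemma subalg_eq_UNIV_if_tensors_and_odd:
  fixes S :: "'a::field k10 set"
  assumes S: "subalg S" and two: "(2::'a) \<noteq> 0" and three: "(3::'a) \<noteq> 0"
    and t11: "even_elt 0 0 1 0 0 0 \<in> S" and t12: "even_elt 0 0 0 1 0 0 \<in> S"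
    and t21: "even_elt 0 0 0 0 1 0 \<in> S" and t22: "even_elt 0 0 0 0 0 1 \<in> S"
    and w: "odd_elt p1 p2 q1 q2 \<in> S" and w_nonzero: "p1 \<noteq> 0 \<or> p2 \<noteq> 0 \<or> q1 \<noteq> 0 \<or> q2 \<noteq> 0"
  shows "S = UNIV"
proof -
  note nz = numeral_Bit0_nonzero[OF two]
  have from_x1: "S = UNIV" if x1: "odd_elt 1 0 0 0 \<in> S"
  proof -
    have x2: "odd_elt 0 0 1 0 \<in> S"
      using odd_elt_smul_mem[OF S subalg_mult[OF S t21 x1, unfolded mult_even_odd], of 2] two by simp
    have y2: "odd_elt 0 0 0 1 \<in> S"
      using odd_elt_smul_mem[OF S subalg_mult[OF S t22 x1, unfolded mult_even_odd], of 2] two by simp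
    have y1: "odd_elt 0 1 0 0 \<in> S"
      using odd_elt_smul_mem[OF S subalg_mult[OF S t21 y2, unfolded mult_even_odd], of 2] two by simp
    show ?thesis by (rule subalg_eq_UNIV_if_odd_basis[OF S two three x1 y1 x2 y2])
  qed
  consider "p1 = 0" "p2 = 0" "q2 \<noteq> 0" | "p1 = 0" "p2 = 0" "q1 \<noteq> 0" | "p2 \<noteq> 0" | "p1 \<noteq> 0" "p2 = 0"
    using w_nonzero by blast
  then show ?thesis
  proof cases
    case 1
    have "odd_elt (q2/2) 0 0 0 \<in> S" using subalg_mult[OF S t11 w] 1 by (simp add: mult_even_odd)
    then show ?thesis using from_x1 odd_elt_smul_mem[OF S, of "q2/2" 0 0 0 "2/q2"] 1 two by simp
  next
    case 2
    have "odd_elt (-q1/2) 0 0 0 \<in> S" using subalg_mult[OF S t12 w] 2 by (simp add: mult_even_odd)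
    then show ?thesis using from_x1 odd_elt_smul_mem[OF S, of "-q1/2" 0 0 0 "-2/q1"] 2 two by simp
  next
    case 3
    have w': "odd_elt (q2/2) 0 (-p2/2) 0 \<in> S" using subalg_mult[OF S t11 w] by (simp add: mult_even_odd)
    have "odd_elt (p2/4) 0 0 0 \<in> S"
      by (rule odd_elt_mem_cong[OF subalg_mult[OF S t12 w', unfolded mult_even_odd]])
        (use nz in \<open>simp_all add: field_simps\<close>)
    then show ?thesis using from_x1 odd_elt_smul_mem[OF S, of "p2/4" 0 0 0 "4/p2"] 3 nz by simp
  next
    case 4
    have w': "odd_elt 0 (q2/2) (p1/2) 0 \<in> S" using subalg_mult[OF S t21 w] 4 by (simp add: mult_even_odd)
    have "odd_elt 0 (-p1/4) 0 0 \<in> S"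
      by (rule odd_elt_mem_cong[OF subalg_mult[OF S t22 w', unfolded mult_even_odd]])
        (use nz in \<open>simp_all add: field_simps\<close>)
    then have y1: "odd_elt 0 1 0 0 \<in> S"
      using odd_elt_smul_mem[OF S, of 0 "-p1/4" 0 0 "-4/p1"] 4 nz by simp
    have y2: "odd_elt 0 0 0 1 \<in> S"
      using odd_elt_smul_mem[OF S subalg_mult[OF S t12 y1, unfolded mult_even_odd], of "-2"] two by simp
    show ?thesis
      using from_x1 odd_elt_smul_mem[OF S subalg_mult[OF S t11 y2, unfolded mult_even_odd], of 2] two
      by simp
  qed
qed

text \<open>For odd \<open>w, w'\<close> the product \<open>(w w') w\<close> rescales the two halves \<open>V\<otimes>e\<close> and \<open>e\<otimes>V\<close> of
  \<open>w\<close> by the two areas \<open>p \<and> r\<close> and \<open>q \<and> s\<close>; if these differ, the halves separate.\<close>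
lemma odd_halves_mem_if_areas_differ:
  fixes S :: "'a::field k10 set"
  assumes S: "subalg S" and two: "(2::'a) \<noteq> 0"
    and w: "odd_elt p1 p2 q1 q2 \<in> S" and w': "odd_elt r1 r2 s1 s2 \<in> S"
    and areas: "p1*r2 - p2*r1 \<noteq> q1*s2 - q2*s1"
  shows "odd_elt p1 p2 0 0 \<in> S" "odd_elt 0 0 q1 q2 \<in> S"
proof -
  note nz = numeral_Bit0_nonzero[OF two]
  define a where "a = p1*r2 - p2*r1"
  define b where "b = q1*s2 - q2*s1"
  have ab: "a - b \<noteq> 0" using areas by (simp add: a_def b_def)
  have m: "odd_elt (a/8*p1) (a/8*p2) (b/8*q1) (b/8*q2) \<in> S"
    by (rule odd_elt_mem_cong[OF subalg_mult[OF S subalg_mult[OF S w w'] w,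
          unfolded mult_odd_odd mult_even_odd]])
      (use nz in \<open>simp_all add: a_def b_def field_simps\<close>)
  have left: "odd_elt ((a-b)/8*p1) ((a-b)/8*p2) 0 0 \<in> S"
    by (rule odd_elt_mem_cong[OF odd_elt_lincomb_mem[OF S m w, of 1 "-(b/8)"]])
      (use nz in \<open>simp_all add: field_simps\<close>)
  then show "odd_elt p1 p2 0 0 \<in> S"
    using odd_elt_smul_mem[OF S left, of "8/(a-b)"] ab nz by simp
  have right: "odd_elt 0 0 ((b-a)/8*q1) ((b-a)/8*q2) \<in> S"
    by (rule odd_elt_mem_cong[OF odd_elt_lincomb_mem[OF S m w, of 1 "-(a/8)"]])
      (use nz in \<open>simp_all add: field_simps\<close>)
  then show "odd_elt 0 0 q1 q2 \<in> S"
    using odd_elt_smul_mem[OF S right, of "8/(b-a)"] ab nz by simp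
qed

lemma cramer_2x2:
  fixes p1 p2 r1 r2 :: "'a::field"
  assumes d: "p1*r2 - p2*r1 \<noteq> 0"
  shows "\<exists>\<alpha> \<beta>. \<alpha>*p1 + \<beta>*r1 = c1 \<and> \<alpha>*p2 + \<beta>*r2 = c2"
proof (intro exI conjI)
  let ?d = "p1*r2 - p2*r1"
  have "(c1*r2 - c2*r1) * p1 + (p1*c2 - p2*c1) * r1 = c1 * ?d"
    and "(c1*r2 - c2*r1) * p2 + (p1*c2 - p2*c1) * r2 = c2 * ?d"
    by (simp_all add: algebra_simps)
  then show "(c1*r2 - c2*r1)/?d * p1 + (p1*c2 - p2*c1)/?d * r1 = c1"
    and "(c1*r2 - c2*r1)/?d * p2 + (p1*c2 - p2*c1)/?d * r2 = c2"
    using d by (simp_all add: add_divide_distrib[symmetric])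
qed

lemma left_odd_elts_mem_if_independent:
  assumes S: "subalg S" and "odd_elt p1 p2 0 0 \<in> S" "odd_elt r1 r2 0 0 \<in> S"
    and "p1*r2 - p2*r1 \<noteq> 0"
  shows "odd_elt c1 c2 0 0 \<in> S"
proof -
  obtain \<alpha> \<beta> where "\<alpha>*p1 + \<beta>*r1 = c1" "\<alpha>*p2 + \<beta>*r2 = c2" using cramer_2x2 assms(4) by blast
  then show ?thesis using odd_elt_lincomb_mem[OF assms(1-3), of \<alpha> \<beta>] by simp
qed

lemma right_odd_elts_mem_if_independent:
  assumes S: "subalg S" and "odd_elt 0 0 q1 q2 \<in> S" "odd_elt 0 0 s1 s2 \<in> S"
    and "q1*s2 - q2*s1 \<noteq> 0"
  shows "odd_elt 0 0 c1 c2 \<in> S"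
proof -
  obtain \<alpha> \<beta> where "\<alpha>*q1 + \<beta>*s1 = c1" "\<alpha>*q2 + \<beta>*s2 = c2" using cramer_2x2 assms(4) by blast
  then show ?thesis using odd_elt_lincomb_mem[OF assms(1-3), of \<alpha> \<beta>] by simp
qed

text \<open>\<open>odd_elt 1 0 1 0\<close> and \<open>odd_elt 0 1 0 1\<close> span the odd part of \<open>sub_phi\<close>.\<close>
lemma subalg_eq_UNIV_if_off_diagonal_odd:
  fixes S :: "'a::field k10 set"
  assumes S: "subalg S" and two: "(2::'a) \<noteq> 0" and three: "(3::'a) \<noteq> 0"
    and d1: "odd_elt 1 0 1 0 \<in> S" and d2: "odd_elt 0 1 0 1 \<in> S"
    and w: "odd_elt p1 p2 q1 q2 \<in> S" and off_diagonal: "p1 \<noteq> q1 \<or> p2 \<noteq> q2"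
  shows "S = UNIV"
proof -
  define r1 r2 where "r1 = p1 - q1" and "r2 = p2 - q2"
  have "odd_elt q1 q2 q1 q2 \<in> S" using odd_elt_lincomb_mem[OF S d1 d2, of q1 q2] by simp
  from odd_elt_lincomb_mem[OF S w this, of 1 "-1"]
  have r: "odd_elt r1 r2 0 0 \<in> S" by (simp add: r1_def r2_def)
  have r_nonzero: "r1 \<noteq> 0 \<or> r2 \<noteq> 0" using off_diagonal by (simp add: r1_def r2_def)
  have x1: "odd_elt 1 0 0 0 \<in> S"
  proof (cases "r2 = 0")
    case True
    then show ?thesis using odd_elt_smul_mem[OF S r, of "1/r1"] r_nonzero by simp
  next
    case False
    then show ?thesis using odd_halves_mem_if_areas_differ(1)[OF S two d1 r] by simp
  qed
  have y1: "odd_elt 0 1 0 0 \<in> S"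
  proof (cases "r1 = 0")
    case True
    then show ?thesis using odd_elt_smul_mem[OF S r, of "1/r2"] r_nonzero by simp
  next
    case False
    then show ?thesis using odd_halves_mem_if_areas_differ(1)[OF S two d2 r] by simp
  qed
  have x2: "odd_elt 0 0 1 0 \<in> S"
    using odd_elt_lincomb_mem[OF S d1 x1, of 1 "-1"] by simp
  have y2: "odd_elt 0 0 0 1 \<in> S"
    using odd_elt_lincomb_mem[OF S d2 y1, of 1 "-1"] by simp
  show ?thesis by (rule subalg_eq_UNIV_if_odd_basis[OF S two three x1 y1 x2 y2])
qed

section \<open>Automorphisms\<close>

lemma aut_vzero: assumes "aut10 f" shows "f vzero = vzero"
proof -
  have "f vzero = f (vadd vzero vzero)" by (simp add: vadd_def vzero_def)
  also have "\<dots> = vadd (f vzero) (f vzero)" using assms by (simp add: aut10_def)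
  finally have "f vzero i = f vzero i + f vzero i" for i by (metis vadd_def)
  then have "f vzero i = 0" for i by (metis add_cancel_right_right)
  then show ?thesis by (simp add: vzero_def fun_eq_iff)
qed

definition odd_part :: "'a::field k10 \<Rightarrow> 'a k10"
  where "odd_part u = (\<lambda>i. if par10 i then u i else 0)"

lemma aut_even_part: assumes f: "aut10 f" shows "f (even_part u) = even_part (f u)"
proof -
  have "u = vadd (even_part u) (odd_part u)"
    by (auto simp: vadd_def even_part_def odd_part_def)
  then have fu: "f u = vadd (f (even_part u)) (f (odd_part u))"
    using f by (metis aut10_def)
  have "is_even (even_part u)" "is_odd (odd_part u)"
    by (simp_all add: is_even_def is_odd_def even_part_def odd_part_def)
  then have "is_even (f (even_part u))" "is_odd (f (odd_part u))"
    using f by (simp_all add: aut10_def)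
  then show ?thesis
    unfolding fu by (auto simp: even_part_def vadd_def is_even_def is_odd_def)
qed

lemma aut_inj: "aut10 f \<Longrightarrow> f u = f v \<longleftrightarrow> u = v"
  by (auto simp: aut10_def bij_def inj_eq)

lemma aut_is_even_iff: assumes f: "aut10 f" shows "is_even (f u) \<longleftrightarrow> is_even u"
  using aut_even_part[OF f, of u] aut_inj[OF f, of "even_part u" u]
  by (simp add: is_even_iff_even_part)

lemma aut_is_odd_iff: assumes f: "aut10 f" shows "is_odd (f u) \<longleftrightarrow> is_odd u"
  using aut_even_part[OF f, of u] aut_inj[OF f, of "even_part u" vzero]
  by (simp add: is_odd_iff_even_part aut_vzero[OF f])

lemma aut_inv: assumes f: "aut10 f" shows "aut10 (inv f)"
proof -
  have b: "bij f" using f by (simp add: aut10_def)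
  have f_inv: "f (inv f u) = u" for u using b by (simp add: bij_is_surj surj_f_inv_f)
  have "inv f (vadd u v) = vadd (inv f u) (inv f v)" for u v
    by (subst aut_inj[OF f, symmetric]) (use f in \<open>simp add: aut10_def f_inv\<close>)
  moreover have "inv f (smul c u) = smul c (inv f u)" for c u
    by (subst aut_inj[OF f, symmetric]) (use f in \<open>simp add: aut10_def f_inv\<close>)
  moreover have "inv f (mult10 u v) = mult10 (inv f u) (inv f v)" for u v
    by (subst aut_inj[OF f, symmetric]) (use f in \<open>simp add: aut10_def f_inv\<close>)
  moreover have "is_even (inv f u)" if "is_even u" for u
    using that aut_is_even_iff[OF f, of "inv f u"] by (simp add: f_inv)
  moreover have "is_odd (inv f u)" if "is_odd u" for u
    using that aut_is_odd_iff[OF f, of "inv f u"] by (simp add: f_inv)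
  ultimately show ?thesis
    unfolding aut10_def using bij_imp_bij_inv[OF b] by blast
qed

lemma aut_comp: "aut10 f \<Longrightarrow> aut10 g \<Longrightarrow> aut10 (f \<circ> g)"
  unfolding aut10_def by (auto intro: bij_comp)

lemma aut_id: "aut10 id"
  unfolding aut10_def by simp

lemma aut_image_subalg: assumes f: "aut10 f" and S: "subalg S" shows "subalg (f ` S)"
  unfolding subalg_def
proof (intro conjI ballI allI)
  show "vzero \<in> f ` S" using aut_vzero[OF f] S by (metis image_eqI subalg_def)
next
  fix u v assume "u \<in> f ` S" "v \<in> f ` S"
  then obtain a b where a: "a \<in> S" "u = f a" and b: "b \<in> S" "v = f b" by blast
  have "vadd u v = f (vadd a b)" "mult10 u v = f (mult10 a b)" using f a b by (simp_all add: aut10_def)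
  then show "vadd u v \<in> f ` S" "mult10 u v \<in> f ` S"
    using subalg_vadd[OF S a(1) b(1)] subalg_mult[OF S a(1) b(1)] by simp_all
next
  fix c u assume "u \<in> f ` S"
  then obtain a where a: "a \<in> S" "u = f a" by blast
  have "smul c u = f (smul c a)" "even_part u = f (even_part a)"
    using f a aut_even_part[OF f, of a] by (simp_all add: aut10_def)
  then show "smul c u \<in> f ` S" "even_part u \<in> f ` S"
    using subalg_smul[OF S a(1)] subalg_even_part[OF S a(1)] by simp_all
qed

lemma aut_image_eq_UNIV_iff: assumes "aut10 f" shows "f ` S = UNIV \<longleftrightarrow> S = UNIV"
proof
  have "inj f" using assms by (simp add: aut10_def bij_is_inj)
  moreover assume "f ` S = UNIV"
  ultimately show "S = UNIV" by (metis UNIV_I UNIV_eq_I inj_image_mem_iff)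
next
  assume "S = UNIV"
  then show "f ` S = UNIV" using assms by (simp add: aut10_def bij_is_surj)
qed

lemma aut_image_maximal:
  assumes f: "aut10 f" and M: "maximal_subalg S"
  shows "maximal_subalg (f ` S)"
  unfolding maximal_subalg_def
proof (intro conjI allI impI)
  have S: "subalg S" "S \<noteq> UNIV" using M by (auto simp: maximal_subalg_def)
  then show "subalg (f ` S)" "f ` S \<noteq> UNIV"
    using aut_image_subalg[OF f] aut_image_eq_UNIV_iff[OF f] by auto
  have b: "bij f" using f by (simp add: aut10_def)
  fix S' assume S': "subalg S' \<and> f ` S \<subseteq> S' \<and> S' \<noteq> UNIV"
  have "subalg (inv f ` S')" "inv f ` S' \<noteq> UNIV"
    using S' aut_image_subalg[OF aut_inv[OF f]] aut_image_eq_UNIV_iff[OF aut_inv[OF f]] by auto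
  moreover have "S \<subseteq> inv f ` S'"
    using S' b by (metis bij_is_inj image_inv_f_f image_mono)
  ultimately have "inv f ` S' = S" using M by (auto simp: maximal_subalg_def)
  then show "S' = f ` S"
    using b by (metis bij_is_surj image_f_inv_f)
qed

lemma subalg_fixed_points: assumes f: "aut10 f" shows "subalg {u. f u = u}"
  unfolding subalg_def
  using f aut_vzero[OF f] aut_even_part[OF f] by (simp add: aut10_def)

text \<open>\<open>tensor_aut G H = g \<otimes> h\<close>, where \<open>g, h\<close> fix \<open>e\<close> and act on \<open>Fx + Fy\<close> by the matrices
  \<open>G, H \<in> SL\<^sub>2\<close>: in coordinates \<open>p \<mapsto> G p\<close> on \<open>V\<otimes>e\<close>, \<open>q \<mapsto> H q\<close> on \<open>e\<otimes>V\<close> and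
  \<open>t \<mapsto> G t H\<^sup>T\<close> on \<open>V\<otimes>V\<close>, with \<open>V = Fx + Fy\<close>.\<close>
definition tensor_aut :: "'a::field \<times> 'a \<times> 'a \<times> 'a \<Rightarrow> 'a \<times> 'a \<times> 'a \<times> 'a \<Rightarrow> 'a k10 \<Rightarrow> 'a k10"
  where "tensor_aut G H u = (case G of (g11, g12, g21, g22) \<Rightarrow> case H of (h11, h12, h21, h22) \<Rightarrow>
    vec (u One) (u (T E E))
     (h11 * u (T E X) + h12 * u (T E Y)) (h21 * u (T E X) + h22 * u (T E Y))
     (g11 * u (T X E) + g12 * u (T Y E))
     (g11*u (T X X)*h11 + g11*u (T X Y)*h12 + g12*u (T Y X)*h11 + g12*u (T Y Y)*h12)
     (g11*u (T X X)*h21 + g11*u (T X Y)*h22 + g12*u (T Y X)*h21 + g12*u (T Y Y)*h22)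
     (g21 * u (T X E) + g22 * u (T Y E))
     (g21*u (T X X)*h11 + g21*u (T X Y)*h12 + g22*u (T Y X)*h11 + g22*u (T Y Y)*h12)
     (g21*u (T X X)*h21 + g21*u (T X Y)*h22 + g22*u (T Y X)*h21 + g22*u (T Y Y)*h22))"

lemma tensor_aut_odd_coords:
  "tensor_aut (g11, g12, g21, g22) (h11, h12, h21, h22) u (T X E) = g11 * u (T X E) + g12 * u (T Y E)"
  "tensor_aut (g11, g12, g21, g22) (h11, h12, h21, h22) u (T Y E) = g21 * u (T X E) + g22 * u (T Y E)"
  "tensor_aut (g11, g12, g21, g22) (h11, h12, h21, h22) u (T E X) = h11 * u (T E X) + h12 * u (T E Y)"
  "tensor_aut (g11, g12, g21, g22) (h11, h12, h21, h22) u (T E Y) = h21 * u (T E X) + h22 * u (T E Y)"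
  by (simp_all add: tensor_aut_def)

lemma tensor_aut_odd_elt:
  "tensor_aut (g11, g12, g21, g22) (h11, h12, h21, h22) (odd_elt p1 p2 q1 q2) =
   odd_elt (g11*p1 + g12*p2) (g21*p1 + g22*p2) (h11*q1 + h12*q2) (h21*q1 + h22*q2)"
  by (simp add: tensor_aut_def odd_elt_def)

lemma tensor_aut_mult_param:
  assumes "g11*g22 - g12*g21 = (1::'a::field)" and "h11*h22 - h12*h21 = 1"
  shows "mult_param k2 k4 k38 k34 k316 (tensor_aut (g11, g12, g21, g22) (h11, h12, h21, h22) u)
           (tensor_aut (g11, g12, g21, g22) (h11, h12, h21, h22) v) =
         tensor_aut (g11, g12, g21, g22) (h11, h12, h21, h22) (mult_param k2 k4 k38 k34 k316 u v)"
  apply (simp only: tensor_aut_def mult_param_def Let_def prod.case vec_simps vec_eq_iff)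
  apply (intro conjI)
  using assms by algebra+

lemma tensor_aut_inverse:
  assumes "g11*g22 - g12*g21 = (1::'a::field)" and "h11*h22 - h12*h21 = 1"
  shows "tensor_aut (g11, g12, g21, g22) (h11, h12, h21, h22)
           (tensor_aut (g22, -g12, -g21, g11) (h22, -h12, -h21, h11) u) = u"
  apply (rule ssubst[OF vec_eta[of u]])
  apply (simp only: tensor_aut_def prod.case vec_simps vec_eq_iff)
  apply (intro conjI refl)
  using assms by algebra+

lemma aut_tensor_aut:
  assumes dg: "g11*g22 - g12*g21 = (1::'a::field)" and dh: "h11*h22 - h12*h21 = 1"
  shows "aut10 (tensor_aut (g11, g12, g21, g22) (h11, h12, h21, h22))"
proof -
  let ?f = "tensor_aut (g11, g12, g21, g22) (h11, h12, h21, h22)"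
  let ?g = "tensor_aut (g22, -g12, -g21, g11) (h22, -h12, -h21, h11)"
  have "g22*g11 - (-g12)*(-g21) = 1" "h22*h11 - (-h12)*(-h21) = 1"
    using dg dh by (simp_all add: algebra_simps)
  from tensor_aut_inverse[OF this] have "?g (?f u) = u" for u by simp
  then have "bij ?f" using tensor_aut_inverse[OF dg dh] by (metis bijI')
  moreover have "?f (vadd u v) = vadd (?f u) (?f v)" for u v
    by (subst (1 2) vec_eta[of u], subst (1 2) vec_eta[of v])
      (simp add: tensor_aut_def vadd_vec vec_eq_iff algebra_simps)
  moreover have "?f (smul c u) = smul c (?f u)" for c u
    by (subst (1 2) vec_eta[of u]) (simp add: tensor_aut_def smul_vec vec_eq_iff algebra_simps)
  moreover have "?f (mult10 u v) = mult10 (?f u) (?f v)" for u v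
    by (simp only: mult10_eq_mult_param tensor_aut_mult_param[OF dg dh])
  moreover have "is_even u \<Longrightarrow> is_even (?f u)" "is_odd u \<Longrightarrow> is_odd (?f u)" for u
    by (simp_all add: is_even_iff is_odd_iff tensor_aut_def)
  ultimately show ?thesis unfolding aut10_def by blast
qed

lemma phi10_vec:
  "phi10 (vec a0 aEE aEX aEY aXE aXX aXY aYE aYX aYY) =
   vec a0 aEE aXE aYE aEX (-aXX) (-aYX) aEY (-aXY) (-aYY)"
proof
  fix k show "phi10 (vec a0 aEE aEX aEY aXE aXX aXY aYE aYX aYY) k =
    vec a0 aEE aXE aYE aEX (-aXX) (-aYX) aEY (-aXY) (-aYY) k"
  proof (cases k)
    case (T a b) then show ?thesis by (cases a; cases b) (simp_all add: phi10_def)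
  qed (simp add: phi10_def)
qed

lemma phi10_odd_coords:
  "phi10 u (T X E) = u (T E X)" "phi10 u (T Y E) = u (T E Y)"
  "phi10 u (T E X) = u (T X E)" "phi10 u (T E Y) = u (T Y E)"
  by (simp_all add: phi10_def)

lemma phi10_phi10: "phi10 (phi10 u) = u"
  by (subst (1 2) vec_eta[of u]) (simp add: phi10_vec)

lemma phi10_mult_param:
  "mult_param k2 k4 k38 k34 k316 (phi10 u) (phi10 v) = phi10 (mult_param k2 k4 k38 k34 k316 u v)"
  apply (subst (1 2) vec_eta[of u], subst (1 2) vec_eta[of v])
  unfolding phi10_vec mult_param_def Let_def vec_simps vec_eq_iff
  by (intro conjI; algebra)

lemma aut_phi10: "aut10 phi10"
proof -
  have "bij phi10" using phi10_phi10 by (metis bijI')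
  moreover have "phi10 (vadd u v) = vadd (phi10 u) (phi10 v)" for u v
    by (subst (1 2) vec_eta[of u], subst (1 2) vec_eta[of v]) (simp add: phi10_vec vadd_vec)
  moreover have "phi10 (smul c u) = smul c (phi10 u)" for c u
    by (subst (1 2) vec_eta[of u]) (simp add: phi10_vec smul_vec)
  moreover have "phi10 (mult10 u v) = mult10 (phi10 u) (phi10 v)" for u v
    by (simp only: mult10_eq_mult_param phi10_mult_param)
  moreover have "is_even u \<Longrightarrow> is_even (phi10 u)" "is_odd u \<Longrightarrow> is_odd (phi10 u)" for u
    by (simp_all add: is_even_iff is_odd_iff phi10_def)
  ultimately show ?thesis unfolding aut10_def by blast
qed

section \<open>The four maximal subalgebras\<close>

lemma all_k3: "(\<forall>c. P c) \<longleftrightarrow> P E \<and> P X \<and> P Y"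
  by (metis k3.exhaust)

lemma all_b10: "(\<forall>k. P k) \<longleftrightarrow> P One \<and> (\<forall>a b. P (T a b))"
  by (metis b10.exhaust)

lemma neg_eq_self_iff: assumes "(2::'a::field) \<noteq> 0" shows "- (a::'a) = a \<longleftrightarrow> a = 0"
proof
  assume "- a = a"
  then have "2 * a = 0" by (metis add_eq_0_iff mult_2)
  then show "a = 0" using assms by simp
qed simp

lemma mem_sub_even: "u \<in> sub_even \<longleftrightarrow> u (T E X) = 0 \<and> u (T E Y) = 0 \<and> u (T X E) = 0 \<and> u (T Y E) = 0"
  by (simp add: sub_even_def is_even_iff)

lemma mem_sub_M: "u \<in> sub_M \<longleftrightarrow> u (T Y E) = 0 \<and> u (T Y X) = 0 \<and> u (T Y Y) = 0"
  by (simp add: sub_M_def all_k3)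

lemma mem_sub_iv: "u \<in> sub_iv \<longleftrightarrow> u (T E X) = 0 \<and> u (T Y E) = 0 \<and> u (T Y X) = 0"
  by (simp add: sub_iv_def all_k3)

lemma mem_sub_phi:
  assumes "(2::'a::field) \<noteq> 0"
  shows "(u :: 'a k10) \<in> sub_phi \<longleftrightarrow> u (T X E) = u (T E X) \<and> u (T Y E) = u (T E Y) \<and>
           u (T X X) = 0 \<and> u (T X Y) + u (T Y X) = 0 \<and> u (T Y Y) = 0"
proof -
  have "u \<in> sub_phi \<longleftrightarrow> u (T X E) = u (T E X) \<and> u (T Y E) = u (T E Y) \<and>
          - u (T X X) = u (T X X) \<and> - u (T Y X) = u (T X Y) \<and> - u (T Y Y) = u (T Y Y)"
    unfolding sub_phi_def fun_eq_iff all_b10 all_k3 by (auto simp: phi10_def; metis minus_minus)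
  then show ?thesis using neg_eq_self_iff[OF assms] by (auto simp: neg_eq_iff_add_eq_0 add.commute)
qed

lemma subalg_sub_even: "subalg sub_even"
  unfolding subalg_def
  by (simp add: mem_sub_even vzero_def vadd_def smul_def even_part_def mult10_eq_mult_param
      mult_param_def Let_def)

lemma subalg_sub_M: "subalg sub_M"
  unfolding subalg_def
  by (simp add: mem_sub_M vzero_def vadd_def smul_def even_part_def mult10_eq_mult_param
      mult_param_def Let_def)

lemma subalg_sub_iv: "subalg sub_iv"
  unfolding subalg_def
  by (simp add: mem_sub_iv vzero_def vadd_def smul_def even_part_def mult10_eq_mult_param
      mult_param_def Let_def)

lemma subalg_sub_phi: "subalg sub_phi"
  unfolding sub_phi_def by (rule subalg_fixed_points[OF aut_phi10])

lemma maximal_subalgI: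
  assumes "subalg A" "A \<noteq> UNIV"
    and "\<And>S u. subalg S \<Longrightarrow> A \<subseteq> S \<Longrightarrow> u \<in> S \<Longrightarrow> u \<notin> A \<Longrightarrow> S = UNIV"
  shows "maximal_subalg A"
  unfolding maximal_subalg_def using assms by blast

lemma maximal_sub_even:
  assumes two: "(2::'a::field) \<noteq> 0" and three: "(3::'a) \<noteq> 0"
  shows "maximal_subalg (sub_even :: 'a k10 set)"
proof (rule maximal_subalgI[OF subalg_sub_even])
  show "sub_even \<noteq> UNIV" using mem_sub_even[of "odd_elt 1 0 0 0"] by auto
next
  fix S :: "'a k10 set" and u
  assume S: "subalg S" and sub: "sub_even \<subseteq> S" and u: "u \<in> S" "u \<notin> sub_even"
  have "even_elt a c t11 t12 t21 t22 \<in> S" for a c t11 t12 t21 t22 using sub by (auto simp: mem_sub_even)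
  then show "S = UNIV"
    using subalg_eq_UNIV_if_tensors_and_odd[OF S two three _ _ _ _ odd_component_mem[OF S u(1)]] u(2)
    by (auto simp: mem_sub_even)
qed

lemma maximal_sub_M:
  assumes two: "(2::'a::field) \<noteq> 0" and three: "(3::'a) \<noteq> 0"
  shows "maximal_subalg (sub_M :: 'a k10 set)"
proof (rule maximal_subalgI[OF subalg_sub_M])
  show "sub_M \<noteq> UNIV" using mem_sub_M[of "odd_elt 0 1 0 0"] by auto
next
  fix S :: "'a k10 set" and u
  assume S: "subalg S" and sub: "sub_M \<subseteq> S" and u: "u \<in> S" "u \<notin> sub_M"
  have x1: "odd_elt 1 0 0 0 \<in> S" and x2: "odd_elt 0 0 1 0 \<in> S" and y2: "odd_elt 0 0 0 1 \<in> S"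
    using sub by (auto simp: mem_sub_M)
  have from_y1: "S = UNIV" if "odd_elt 0 1 0 0 \<in> S"
    by (rule subalg_eq_UNIV_if_odd_basis[OF S two three x1 that x2 y2])
  have "odd_elt (u (T X E)) 0 (u (T E X)) (u (T E Y)) \<in> S" using sub by (auto simp: mem_sub_M)
  from odd_elt_lincomb_mem[OF S odd_component_mem[OF S u(1)] this, of 1 "-1"]
  have y1: "odd_elt 0 (u (T Y E)) 0 0 \<in> S" by simp
  have "even_elt (u One) (u (T E E)) (u (T X X)) (u (T X Y)) 0 0 \<in> S" using sub by (auto simp: mem_sub_M)
  from even_elt_lincomb_mem[OF S even_component_mem[OF S u(1)] this, of 1 "-1"]
  have t: "even_elt 0 0 0 0 (u (T Y X)) (u (T Y Y)) \<in> S" by simp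
  have "odd_elt 0 (- u (T Y Y)/2) 0 0 \<in> S" "odd_elt 0 (u (T Y X)/2) 0 0 \<in> S"
    using subalg_mult[OF S t x2] subalg_mult[OF S t y2] by (simp_all add: mult_even_odd)
  moreover have "u (T Y E) \<noteq> 0 \<or> - u (T Y Y)/2 \<noteq> 0 \<or> u (T Y X)/2 \<noteq> 0"
    using u(2) two by (auto simp: mem_sub_M)
  ultimately obtain c where c: "odd_elt 0 c 0 0 \<in> S" "c \<noteq> 0" using y1 by blast
  then show "S = UNIV" using from_y1 odd_elt_smul_mem[OF S c(1), of "1/c"] by simp
qed

lemma maximal_sub_iv:
  assumes two: "(2::'a::field) \<noteq> 0" and three: "(3::'a) \<noteq> 0"
  shows "maximal_subalg (sub_iv :: 'a k10 set)"
proof (rule maximal_subalgI[OF subalg_sub_iv])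
  show "sub_iv \<noteq> UNIV" using mem_sub_iv[of "odd_elt 0 1 0 0"] by auto
next
  fix S :: "'a k10 set" and u
  assume S: "subalg S" and sub: "sub_iv \<subseteq> S" and u: "u \<in> S" "u \<notin> sub_iv"
  have x1: "odd_elt 1 0 0 0 \<in> S" and y2: "odd_elt 0 0 0 1 \<in> S"
    and t11: "even_elt 0 0 1 0 0 0 \<in> S" and t22: "even_elt 0 0 0 0 0 1 \<in> S"
    using sub by (auto simp: mem_sub_iv)
  have from_x2: "S = UNIV" if x2: "odd_elt 0 0 1 0 \<in> S"
  proof -
    have "odd_elt 0 1 0 0 \<in> S"
      using odd_elt_smul_mem[OF S subalg_mult[OF S t22 x2, unfolded mult_even_odd], of "-2"] two by simp
    then show ?thesis by (rule subalg_eq_UNIV_if_odd_basis[OF S two three x1 _ x2 y2])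
  qed
  have "odd_elt (u (T X E)) 0 0 (u (T E Y)) \<in> S" using sub by (auto simp: mem_sub_iv)
  from odd_elt_lincomb_mem[OF S odd_component_mem[OF S u(1)] this, of 1 "-1"]
  have w: "odd_elt 0 (u (T Y E)) (u (T E X)) 0 \<in> S" by simp
  have "even_elt (u One) (u (T E E)) (u (T X X)) (u (T X Y)) 0 (u (T Y Y)) \<in> S"
    using sub by (auto simp: mem_sub_iv)
  from even_elt_lincomb_mem[OF S even_component_mem[OF S u(1)] this, of 1 "-1"]
  have t: "even_elt 0 0 0 0 (u (T Y X)) 0 \<in> S" by simp
  have "odd_elt 0 0 (u (T Y X)/2) 0 \<in> S" using subalg_mult[OF S t x1] by (simp add: mult_even_odd)
  moreover have "odd_elt 0 0 (- u (T Y E)/2) 0 \<in> S"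
    using subalg_mult[OF S t11 w] by (simp add: mult_even_odd)
  moreover have "odd_elt 0 0 (u (T E X)) 0 \<in> S" if "u (T Y E) = 0"
    using w that by simp
  moreover have "u (T Y X)/2 \<noteq> 0 \<or> - u (T Y E)/2 \<noteq> 0 \<or> (u (T Y E) = 0 \<and> u (T E X) \<noteq> 0)"
    using u(2) two by (auto simp: mem_sub_iv)
  ultimately obtain c where c: "odd_elt 0 0 c 0 \<in> S" "c \<noteq> 0" by blast
  then show "S = UNIV" using from_x2 odd_elt_smul_mem[OF S c(1), of "1/c"] by simp
qed

lemma maximal_sub_phi:
  assumes two: "(2::'a::field) \<noteq> 0" and three: "(3::'a) \<noteq> 0"
  shows "maximal_subalg (sub_phi :: 'a k10 set)"
proof (rule maximal_subalgI[OF subalg_sub_phi])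
  have "(odd_elt 1 0 0 0 :: 'a k10) \<notin> sub_phi" using mem_sub_phi[OF two, of "odd_elt 1 0 0 0"] by simp
  then show "(sub_phi :: 'a k10 set) \<noteq> UNIV" by blast
next
  fix S :: "'a k10 set" and u
  assume S: "subalg S" and sub: "sub_phi \<subseteq> S" and u: "u \<in> S" "u \<notin> sub_phi"
  have d1: "odd_elt 1 0 1 0 \<in> S" and d2: "odd_elt 0 1 0 1 \<in> S"
    using sub by (auto simp: mem_sub_phi[OF two])
  note off_diagonal = subalg_eq_UNIV_if_off_diagonal_odd[OF S two three d1 d2]
  show "S = UNIV"
  proof (cases "u (T X E) = u (T E X) \<and> u (T Y E) = u (T E Y)")
    case False
    then show ?thesis using off_diagonal[OF odd_component_mem[OF S u(1)]] by blast
  next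
    case True
    define A B C where "A = u (T X X)" and "B = u (T Y Y)" and "C = u (T X Y) + u (T Y X)"
    have "A \<noteq> 0 \<or> B \<noteq> 0 \<or> C \<noteq> 0"
      using u(2) True by (auto simp: mem_sub_phi[OF two] A_def B_def C_def)
    have "even_elt (u One) (u (T E E)) 0 (- u (T Y X)) (u (T Y X)) 0 \<in> S"
      using sub by (auto simp: mem_sub_phi[OF two])
    from even_elt_lincomb_mem[OF S even_component_mem[OF S u(1)] this, of 1 "-1"]
    have t: "even_elt 0 0 A C 0 B \<in> S" by (simp add: A_def B_def C_def)
    have m1: "odd_elt (-C/2) (-B/2) 0 (B/2) \<in> S"
      using subalg_mult[OF S t d1] by (simp add: mult_even_odd)
    have m2: "odd_elt (A/2) 0 (-(A/2)) (-(C/2)) \<in> S"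
      using subalg_mult[OF S t d2] by (simp add: mult_even_odd)
    show ?thesis
    proof (cases "B = 0 \<and> C = 0")
      case True
      with \<open>A \<noteq> 0 \<or> B \<noteq> 0 \<or> C \<noteq> 0\<close> have "A/2 \<noteq> -(A/2)" using two by (auto simp: field_simps)
      then show ?thesis using off_diagonal[OF m2] by blast
    next
      case False
      then have "-C/2 \<noteq> 0 \<or> -B/2 \<noteq> B/2" using two by (auto simp: field_simps)
      then show ?thesis using off_diagonal[OF m1] by blast
    qed
  qed
qed

section \<open>Conjugating a proper subalgebra into one of them\<close>

lemma homogeneous_2x2_trivial:
  fixes a b c d x y :: "'a::field"
  assumes "a*x + b*y = 0" "c*x + d*y = 0" "a*d - b*c \<noteq> 0"
  shows "x = 0" "y = 0"
proof -
  have "(a*d - b*c) * x = d*(a*x + b*y) - b*(c*x + d*y)"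
    and "(a*d - b*c) * y = a*(c*x + d*y) - c*(a*x + b*y)"
    by (simp_all add: algebra_simps)
  then show "x = 0" "y = 0" using assms by simp_all
qed

definition proj_rank_le_one :: "'a::field k10 set \<Rightarrow> b10 \<Rightarrow> b10 \<Rightarrow> bool"
  where "proj_rank_le_one S i j \<longleftrightarrow> (\<forall>u\<in>S. \<forall>v\<in>S. u i * v j - u j * v i = 0)"

lemma not_proj_rank_le_one:
  "\<not> proj_rank_le_one S i j \<longleftrightarrow> (\<exists>u\<in>S. \<exists>v\<in>S. u i * v j - u j * v i \<noteq> 0)"
  by (auto simp: proj_rank_le_one_def)

lemma sl2_annihilating_row:
  assumes "proj_rank_le_one S i j"
  obtains g11 g12 g21 g22 :: "'a::field"
  where "g11*g22 - g12*g21 = 1" "\<forall>u\<in>S. g21 * u i + g22 * u j = 0"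
proof (cases "\<exists>w\<in>S. w i \<noteq> 0 \<or> w j \<noteq> 0")
  case True
  then obtain w where w: "w \<in> S" "w i \<noteq> 0 \<or> w j \<noteq> 0" by blast
  have row: "\<forall>u\<in>S. - w j * u i + w i * u j = 0"
    using assms w(1) by (auto simp: proj_rank_le_one_def algebra_simps)
  show ?thesis
  proof (cases "w i = 0")
    case True
    with w(2) have "w j \<noteq> 0" by simp
    show ?thesis by (rule that[of 0 "w i" "1 / w j" "- w j"]) (use \<open>w j \<noteq> 0\<close> row in auto)
  next
    case False
    show ?thesis by (rule that[of "1 / w i" "w i" 0 "- w j"]) (use False row in auto)
  qed
next
  case False
  then show ?thesis by (intro that[of 1 1 0 0]) auto
qed

lemma subset_sub_iv:
  fixes S :: "'a::field k10 set"
  assumes S: "subalg S" and two: "(2::'a) \<noteq> 0"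
    and vanish: "\<forall>u\<in>S. u (T E X) = 0 \<and> u (T Y E) = 0"
    and w: "w \<in> S" and w_nonzero: "w (T X E) \<noteq> 0 \<or> w (T E Y) \<noteq> 0"
  shows "S \<subseteq> sub_iv"
proof
  fix u assume u: "u \<in> S"
  have "mult10 (even_elt (u One) (u (T E E)) (u (T X X)) (u (T X Y)) (u (T Y X)) (u (T Y Y)))
      (odd_elt (w (T X E)) (w (T Y E)) (w (T E X)) (w (T E Y))) \<in> S"
    (is "?m \<in> S") by (rule subalg_mult[OF S even_component_mem[OF S u] odd_component_mem[OF S w]])
  then have "u (T Y X) * w (T X E) = 0" "u (T Y X) * w (T E Y) = 0"
    using vanish[rule_format, of ?m] vanish[rule_format, OF w] two by (auto simp: mult_even_odd)
  then have "u (T Y X) = 0" using w_nonzero by auto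
  then show "u \<in> sub_iv" using vanish u by (simp add: mem_sub_iv)
qed

lemma subset_sub_M:
  fixes S :: "'a::field k10 set"
  assumes S: "subalg S" and two: "(2::'a) \<noteq> 0"
    and vanish: "\<forall>u\<in>S. u (T Y E) = 0" and Q: "\<not> proj_rank_le_one S (T E X) (T E Y)"
  shows "S \<subseteq> sub_M"
proof
  fix u assume u: "u \<in> S"
  have eq: "w (T E Y) * u (T Y X) + (- w (T E X)) * u (T Y Y) = 0" if w: "w \<in> S" for w
  proof -
    have "mult10 (even_elt (u One) (u (T E E)) (u (T X X)) (u (T X Y)) (u (T Y X)) (u (T Y Y)))
        (odd_elt (w (T X E)) (w (T Y E)) (w (T E X)) (w (T E Y))) \<in> S"
      (is "?m \<in> S") by (rule subalg_mult[OF S even_component_mem[OF S u] odd_component_mem[OF S w]])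
    then have "(u (T Y X) * w (T E Y) - u (T Y Y) * w (T E X)) / 2 = 0"
      using vanish[rule_format, of ?m] vanish[rule_format, OF w] by (auto simp: mult_even_odd)
    then show ?thesis using two by (simp add: algebra_simps)
  qed
  obtain w1 w2 where w: "w1 \<in> S" "w2 \<in> S" "w1 (T E X) * w2 (T E Y) - w1 (T E Y) * w2 (T E X) \<noteq> 0"
    using Q by (auto simp: not_proj_rank_le_one)
  then have "u (T Y X) = 0" "u (T Y Y) = 0"
    using homogeneous_2x2_trivial[OF eq[OF w(1)] eq[OF w(2)]] by (simp_all add: algebra_simps)
  then show "u \<in> sub_M" using vanish u by (simp add: mem_sub_M)
qed

lemma subset_sub_phi:
  fixes S :: "'a::field k10 set"
  assumes S: "subalg S" and two: "(2::'a) \<noteq> 0" and three: "(3::'a) \<noteq> 0"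
    and proper: "S \<noteq> UNIV" and d1: "odd_elt 1 0 1 0 \<in> S" and d2: "odd_elt 0 1 0 1 \<in> S"
  shows "S \<subseteq> sub_phi"
proof
  fix u assume u: "u \<in> S"
  have diagonal: "v (T X E) = v (T E X) \<and> v (T Y E) = v (T E Y)" if "v \<in> S" for v
    using subalg_eq_UNIV_if_off_diagonal_odd[OF S two three d1 d2 odd_component_mem[OF S that]]
      proper by blast
  let ?\<alpha> = "u One + u (T E E) / 2"
  note t = even_component_mem[OF S u]
  have "odd_elt (2*?\<alpha> - u (T X Y)) (- u (T Y Y)) (2*?\<alpha> + u (T Y X)) (u (T Y Y)) \<in> S"
    by (rule odd_elt_mem_cong[OF odd_elt_smul_mem[OF S subalg_mult[OF S t d1, unfolded mult_even_odd], of 2]])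
      (use two numeral_Bit0_nonzero[OF two] in \<open>simp_all add: field_simps\<close>)
  from diagonal[OF this] have xy: "- u (T X Y) = u (T Y X)" and yy: "- u (T Y Y) = u (T Y Y)"
    by simp_all
  from xy have "u (T X Y) + u (T Y X) = 0" by (simp only: neg_eq_iff_add_eq_0)
  moreover from yy have "u (T Y Y) = 0" by (rule neg_eq_self_iff[OF two, THEN iffD1])
  moreover have "odd_elt (u (T X X)) (2*?\<alpha> + u (T Y X)) (- u (T X X)) (2*?\<alpha> - u (T X Y)) \<in> S"
    by (rule odd_elt_mem_cong[OF odd_elt_smul_mem[OF S subalg_mult[OF S t d2, unfolded mult_even_odd], of 2]])
      (use two numeral_Bit0_nonzero[OF two] in \<open>simp_all add: field_simps\<close>)
  from diagonal[OF this] have "- u (T X X) = u (T X X)" by simp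
  then have "u (T X X) = 0" by (rule neg_eq_self_iff[OF two, THEN iffD1])
  ultimately show "u \<in> sub_phi" using diagonal[OF u] by (simp add: mem_sub_phi[OF two])
qed

lemma subalg_eq_UNIV_if_areas_differ:
  fixes S :: "'a::field k10 set"
  assumes S: "subalg S" and two: "(2::'a) \<noteq> 0" and three: "(3::'a) \<noteq> 0"
    and w1: "odd_elt p1 p2 q1 q2 \<in> S" and w2: "odd_elt r1 r2 s1 s2 \<in> S"
    and independent: "p1*r2 - p2*r1 \<noteq> 0" and areas: "p1*r2 - p2*r1 \<noteq> q1*s2 - q2*s1"
    and Q: "\<not> proj_rank_le_one S (T E X) (T E Y)"
  shows "S = UNIV"
proof -
  have "r1*p2 - r2*p1 \<noteq> s1*q2 - s2*q1" using areas by (auto simp: algebra_simps)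
  with odd_halves_mem_if_areas_differ(1)[OF S two w1 w2 areas]
    odd_halves_mem_if_areas_differ(1)[OF S two w2 w1]
  have left: "odd_elt c1 c2 0 0 \<in> S" for c1 c2
    using left_odd_elts_mem_if_independent[OF S _ _ independent] by blast
  have right: "odd_elt 0 0 (w (T E X)) (w (T E Y)) \<in> S" if "w \<in> S" for w
    using odd_elt_lincomb_mem[OF S odd_component_mem[OF S that] left[of "w (T X E)" "w (T Y E)"], of 1 "-1"]
    by simp
  obtain w3 w4 where "w3 \<in> S" "w4 \<in> S" "w3 (T E X) * w4 (T E Y) - w3 (T E Y) * w4 (T E X) \<noteq> 0"
    using Q by (auto simp: not_proj_rank_le_one)
  then have "odd_elt 0 0 c1 c2 \<in> S" for c1 c2
    using right_odd_elts_mem_if_independent[OF S right right] by blast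
  then show ?thesis using subalg_eq_UNIV_if_odd_basis[OF S two three left left] by blast
qed

lemma tensor_aut_adjugate:
  fixes e :: "'a::field"
  assumes e: "e \<noteq> 0" and p: "p11*p22 - p12*p21 = e" and q: "q11*q22 - q12*q21 = e"
  defines "g \<equiv> tensor_aut (p22/e, -p21/e, -p12, p11) (q22/e, -q21/e, -q12, q11)"
  shows "aut10 g" "g (odd_elt p11 p12 q11 q12) = odd_elt 1 0 1 0"
    "g (odd_elt p21 p22 q21 q22) = odd_elt 0 e 0 e"
proof -
  have "p22/e * p11 - (-p21/e) * (-p12) = 1" "q22/e * q11 - (-q21/e) * (-q12) = 1"
    using e p q by (simp_all add: field_simps mult.commute)
  then show "aut10 g" unfolding g_def by (rule aut_tensor_aut)
  show "g (odd_elt p11 p12 q11 q12) = odd_elt 1 0 1 0" "g (odd_elt p21 p22 q21 q22) = odd_elt 0 e 0 e"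
    using e p q by (simp_all add: g_def tensor_aut_odd_elt odd_elt_eq_iff field_simps mult.commute)
qed

lemma conjugate_into_sub_phi:
  fixes S :: "'a::field k10 set"
  assumes S: "subalg S" and two: "(2::'a) \<noteq> 0" and three: "(3::'a) \<noteq> 0" and proper: "S \<noteq> UNIV"
    and P: "\<not> proj_rank_le_one S (T X E) (T Y E)" and Q: "\<not> proj_rank_le_one S (T E X) (T E Y)"
  shows "\<exists>g. aut10 g \<and> g ` S \<subseteq> sub_phi"
proof -
  obtain w1 w2 where "w1 \<in> S" "w2 \<in> S"
    and e: "w1 (T X E) * w2 (T Y E) - w1 (T Y E) * w2 (T X E) \<noteq> 0"
    using P by (auto simp: not_proj_rank_le_one)
  then obtain p11 p12 q11 q12 p21 p22 q21 q22
    where o1: "odd_elt p11 p12 q11 q12 \<in> S" and o2: "odd_elt p21 p22 q21 q22 \<in> S"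
      and e: "p11*p22 - p12*p21 \<noteq> 0"
    using odd_component_mem[OF S] by blast
  define e where "e = p11*p22 - p12*p21"
  have "q11*q22 - q12*q21 = e"
    using subalg_eq_UNIV_if_areas_differ[OF S two three o1 o2 e _ Q] proper by (auto simp: e_def)
  note g = tensor_aut_adjugate[OF _ e_def[symmetric] this]
  let ?g = "tensor_aut (p22/e, -p21/e, -p12, p11) (q22/e, -q21/e, -q12, q11)"
  have gS: "subalg (?g ` S)" "?g ` S \<noteq> UNIV"
    using aut_image_subalg[OF g(1) S] aut_image_eq_UNIV_iff[OF g(1)] proper e by (auto simp: e_def)
  have d1: "odd_elt 1 0 1 0 \<in> ?g ` S" using g(2) o1 e by (metis e_def image_eqI)
  have "odd_elt 0 e 0 e \<in> ?g ` S" using g(3) o2 e by (metis e_def image_eqI)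
  then have d2: "odd_elt 0 1 0 1 \<in> ?g ` S" using odd_elt_smul_mem[OF gS(1), of 0 e 0 e "1/e"] e
    by (simp add: e_def)
  show ?thesis using subset_sub_phi[OF gS(1) two three gS(2) d1 d2] g(1) e by (auto simp: e_def)
qed

lemma conjugate_into_sub_M:
  fixes S :: "'a::field k10 set"
  assumes S: "subalg S" and two: "(2::'a) \<noteq> 0"
    and P: "proj_rank_le_one S (T X E) (T Y E)" and Q: "\<not> proj_rank_le_one S (T E X) (T E Y)"
  shows "\<exists>g. aut10 g \<and> g ` S \<subseteq> sub_M"
proof -
  obtain g11 g12 g21 g22 where det: "g11*g22 - g12*g21 = 1"
    and row: "\<forall>u\<in>S. g21 * u (T X E) + g22 * u (T Y E) = 0"
    by (rule sl2_annihilating_row[OF P])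
  let ?g = "tensor_aut (g11, g12, g21, g22) (1, 0, 0, 1)"
  have g: "aut10 ?g" using aut_tensor_aut[OF det] by simp
  have "?g ` S \<subseteq> sub_M"
  proof (rule subset_sub_M[OF aut_image_subalg[OF g S] two])
    show "\<forall>u\<in>?g ` S. u (T Y E) = 0" using row by (auto simp: tensor_aut_odd_coords)
    show "\<not> proj_rank_le_one (?g ` S) (T E X) (T E Y)"
      using Q by (auto simp: proj_rank_le_one_def tensor_aut_odd_coords)
  qed
  then show ?thesis using g by blast
qed

lemma conjugate_into_sub_M_swapped:
  fixes S :: "'a::field k10 set"
  assumes S: "subalg S" and two: "(2::'a) \<noteq> 0"
    and P: "\<not> proj_rank_le_one S (T X E) (T Y E)" and Q: "proj_rank_le_one S (T E X) (T E Y)"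
  shows "\<exists>g. aut10 g \<and> g ` S \<subseteq> sub_M"
proof -
  have "proj_rank_le_one (phi10 ` S) (T X E) (T Y E)"
    and "\<not> proj_rank_le_one (phi10 ` S) (T E X) (T E Y)"
    using P Q by (auto simp: proj_rank_le_one_def phi10_odd_coords)
  then obtain g where "aut10 g" "g ` phi10 ` S \<subseteq> sub_M"
    using conjugate_into_sub_M[OF aut_image_subalg[OF aut_phi10 S] two] by blast
  then show ?thesis using aut_comp[OF _ aut_phi10] by (metis image_comp)
qed

lemma conjugate_into_sub_iv:
  fixes S :: "'a::field k10 set"
  assumes S: "subalg S" and two: "(2::'a) \<noteq> 0"
    and P: "proj_rank_le_one S (T X E) (T Y E)" and Q: "proj_rank_le_one S (T E X) (T E Y)"
    and w: "w \<in> S" "w \<notin> sub_even"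
  shows "\<exists>g. aut10 g \<and> g ` S \<subseteq> sub_iv"
proof -
  obtain g11 g12 g21 g22 where dg: "g11*g22 - g12*g21 = 1"
    and row_g: "\<forall>u\<in>S. g21 * u (T X E) + g22 * u (T Y E) = 0"
    by (rule sl2_annihilating_row[OF P])
  obtain h11 h12 h21 h22 where dh: "h11*h22 - h12*h21 = 1"
    and row_h: "\<forall>u\<in>S. h21 * u (T E X) + h22 * u (T E Y) = 0"
    by (rule sl2_annihilating_row[OF Q])
  \<comment> \<open>swapping the rows of \<open>H\<close> (and negating one) makes the annihilating row the first one\<close>
  let ?g = "tensor_aut (g11, g12, g21, g22) (h21, h22, -h11, -h12)"
  have "h21*(-h12) - h22*(-h11) = 1" using dh by (simp add: algebra_simps)
  then have g: "aut10 ?g" by (rule aut_tensor_aut[OF dg])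
  have vanish: "\<forall>u\<in>?g ` S. u (T E X) = 0 \<and> u (T Y E) = 0"
    using row_g row_h by (auto simp: tensor_aut_odd_coords)
  have "\<not> is_even (?g w)" using w aut_is_even_iff[OF g] by (simp add: sub_even_def)
  then have "?g w (T X E) \<noteq> 0 \<or> ?g w (T E Y) \<noteq> 0"
    using vanish w(1) by (auto simp: is_even_iff)
  then have "?g ` S \<subseteq> sub_iv"
    using subset_sub_iv[OF aut_image_subalg[OF g S] two vanish] w(1) by blast
  then show ?thesis using g by blast
qed

lemma proper_subalg_conjugate_into:
  fixes S :: "'a::field k10 set"
  assumes S: "subalg S" and proper: "S \<noteq> UNIV" and two: "(2::'a) \<noteq> 0" and three: "(3::'a) \<noteq> 0"
  shows "\<exists>g A. aut10 g \<and> A \<in> {sub_even, sub_phi, sub_M, sub_iv} \<and> g ` S \<subseteq> A"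
proof (cases "S \<subseteq> sub_even")
  case True
  then show ?thesis using aut_id by fastforce
next
  case False
  then obtain w where w: "w \<in> S" "w \<notin> sub_even" by blast
  consider "proj_rank_le_one S (T X E) (T Y E)" "proj_rank_le_one S (T E X) (T E Y)"
    | "proj_rank_le_one S (T X E) (T Y E)" "\<not> proj_rank_le_one S (T E X) (T E Y)"
    | "\<not> proj_rank_le_one S (T X E) (T Y E)" "proj_rank_le_one S (T E X) (T E Y)"
    | "\<not> proj_rank_le_one S (T X E) (T Y E)" "\<not> proj_rank_le_one S (T E X) (T E Y)"
    by blast
  then show ?thesis
  proof cases
    case 1 then show ?thesis using conjugate_into_sub_iv[OF S two _ _ w] by blast
  next
    case 2 then show ?thesis using conjugate_into_sub_M[OF S two] by blast
  next
    case 3 then show ?thesis using conjugate_into_sub_M_swapped[OF S two] by blast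
  next
    case 4 then show ?thesis using conjugate_into_sub_phi[OF S two three proper] by blast
  qed
qed

theorem corollary4p2:
  fixes S :: "'a::field k10 set"
  assumes "alg_closed TYPE('a)" and "(2::'a) \<noteq> 0" and "(3::'a) \<noteq> 0"
  shows "maximal_subalg S \<longleftrightarrow>
    (\<exists>f. aut10 f \<and> (S = f ` sub_even \<or> S = f ` sub_phi \<or> S = f ` sub_M \<or> S = f ` sub_iv))"
proof
  have maximal: "maximal_subalg A" if "A \<in> {sub_even, sub_phi, sub_M, sub_iv}" for A :: "'a k10 set"
    using that maximal_sub_even maximal_sub_phi maximal_sub_M maximal_sub_iv assms(2,3) by blast
  assume M: "maximal_subalg S"
  then have "subalg S" "S \<noteq> UNIV" by (simp_all add: maximal_subalg_def)
  then obtain g A where g: "aut10 g" and A: "A \<in> {sub_even, sub_phi, sub_M, sub_iv}" and "g ` S \<subseteq> A"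
    using proper_subalg_conjugate_into[OF _ _ assms(2,3)] by blast
  then have "g ` S = A"
    using aut_image_maximal[OF g M] maximal[OF A] by (auto simp: maximal_subalg_def)
  then have "S = inv g ` A" using g by (metis aut10_def bij_is_inj image_inv_f_f)
  then show "\<exists>f. aut10 f \<and> (S = f ` sub_even \<or> S = f ` sub_phi \<or> S = f ` sub_M \<or> S = f ` sub_iv)"
    using aut_inv[OF g] A by blast
next
  assume "\<exists>f. aut10 f \<and> (S = f ` sub_even \<or> S = f ` sub_phi \<or> S = f ` sub_M \<or> S = f ` sub_iv)"
  then show "maximal_subalg S"
    using aut_image_maximal maximal_sub_even maximal_sub_phi maximal_sub_M maximal_sub_iv assms(2,3)
    by metis
qed

end
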